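(* Let $\Gamma$ be a second countable locally compact abelian group, $n\ge2$, $\omega\in\Gamma^n$. An $\omega$-invariant subset $X$ of $\Gamma$ is good if and only if every $\gamma\in X$ satisfies one of: (i) there exists $i\in\{1,\ldots,n\}$ such that $\gamma-m\omega_i\in X$ and $\gamma-m\omega_i\ne\gamma$ for every positive integer $m$; (ii) there exist $i\ne j$ in $\{1,\ldots,n\}$ such that $\gamma-m\omega_i-\omega_j\in X$ for every positive integer $m$.
   Context: A closed $X\subset\Gamma$ is $\omega$-invariant if $X+\omega_i\subset X$ for all $i$ and every $\gamma\in X$ has some $i$ with $\gamma-\omega_i\in X$. An $\omega$-invariant $X$ is bad if there is $\gamma\in X$ such that there is exactly one $i\in\{1,\ldots,n\}$ with $\gamma-\omega_i\in X$ and this $i$ satisfies $m\omega_i=0$ for some positive integer $m$; $X$ is good if it is not bad. *)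

theory Defs
  imports "HOL-Analysis.Analysis"
begin

primrec nmul :: "nat \<Rightarrow> 'a::ab_group_add \<Rightarrow> 'a" where
  "nmul 0 x = 0"
| "nmul (Suc m) x = x + nmul m x"

definition omega_invariant :: "nat \<Rightarrow> (nat \<Rightarrow> 'a::{topological_ab_group_add}) \<Rightarrow> 'a set \<Rightarrow> bool" where
  "omega_invariant n \<omega> X \<longleftrightarrow> closed X
     \<and> (\<forall>i\<in>{1..n}. (\<lambda>x. x + \<omega> i) ` X \<subseteq> X)
     \<and> (\<forall>\<gamma>\<in>X. \<exists>i\<in>{1..n}. \<gamma> - \<omega> i \<in> X)"

definition omega_bad :: "nat \<Rightarrow> (nat \<Rightarrow> 'a::{topological_ab_group_add}) \<Rightarrow> 'a set \<Rightarrow> bool" where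
  "omega_bad n \<omega> X \<longleftrightarrow> omega_invariant n \<omega> X \<and>
     (\<exists>\<gamma>\<in>X. \<exists>i\<in>{1..n}. (\<forall>j\<in>{1..n}. \<gamma> - \<omega> j \<in> X \<longleftrightarrow> j = i)
        \<and> (\<exists>m::nat. m > 0 \<and> nmul m (\<omega> i) = 0))"

definition omega_good :: "nat \<Rightarrow> (nat \<Rightarrow> 'a::{topological_ab_group_add}) \<Rightarrow> 'a set \<Rightarrow> bool" where
  "omega_good n \<omega> X \<longleftrightarrow> omega_invariant n \<omega> X \<and> \<not> omega_bad n \<omega> X"

end

theory Submission
  imports Defs
begin

text \<open>Every point of an \<open>\<omega>\<close>-invariant set \<open>X\<close> has a predecessor, so from \<open>\<gamma> \<in> X\<close> one can
  descend inside \<open>X\<close> along chains of any length; since \<open>X\<close> is closed under adding the \<open>\<omega> i\<close>,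
  steps of such a chain may be discarded, and pigeonhole yields one \<open>i\<close> with
  \<open>\<gamma> - m \<omega>\<^sub>i \<in> X\<close> for all \<open>m\<close>. If no \<open>\<omega> i\<close> has finite order this is condition (i).
  A torsion \<open>\<omega> i\<close> can be subtracted as well as added, which gives (ii) as soon as \<open>\<gamma>\<close> has a
  predecessor \<open>\<gamma> - \<omega> j\<close> with \<open>j \<noteq> i\<close>; otherwise \<open>\<gamma>\<close> is a bad point. Conversely, at a bad
  point (i) fails because the only predecessor direction is periodic, and (ii) fails because
  \<open>\<gamma> - \<omega> i - \<omega> j \<in> X\<close> would give the two predecessors \<open>\<gamma> - \<omega> i\<close> and \<open>\<gamma> - \<omega> j\<close>.\<close>

lemma nmul_add: "nmul (a + b) x = nmul a x + nmul b x"
  by (induction a) (simp_all add: add.assoc)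

lemma nmul_mult: "nmul (a * b) x = nmul b (nmul a x)"
  by (induction b) (simp_all add: nmul_add)

lemma nmul_zero [simp]: "nmul m 0 = 0"
  by (induction m) simp_all

lemma nmul_diff: "d \<le> c \<Longrightarrow> nmul (c - d) x = nmul c x - nmul d x"
  by (metis add_diff_cancel_right' le_add_diff_inverse2 nmul_add)

lemma nmul_torsion_neg:
  assumes "nmul r x = 0" and "r > 0"
  shows "nmul (r * m - m) x = - nmul m x"
proof -
  have "m \<le> r * m" using \<open>r > 0\<close> by simp
  then show ?thesis using assms by (simp add: nmul_diff nmul_mult)
qed

context
  fixes n :: nat and \<omega> :: "nat \<Rightarrow> 'a::topological_ab_group_add" and X :: "'a set"
  assumes inv: "omega_invariant n \<omega> X"
begin

lemma omega_invariant_add: "\<delta> \<in> X \<Longrightarrow> i \<in> {1..n} \<Longrightarrow> \<delta> + \<omega> i \<in> X"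
  using inv unfolding omega_invariant_def by blast

lemma omega_invariant_predecessor: "\<gamma> \<in> X \<Longrightarrow> \<exists>i\<in>{1..n}. \<gamma> - \<omega> i \<in> X"
  using inv unfolding omega_invariant_def by blast

lemma omega_invariant_add_nmul: "\<delta> \<in> X \<Longrightarrow> i \<in> {1..n} \<Longrightarrow> \<delta> + nmul m (\<omega> i) \<in> X"
proof (induction m)
  case (Suc m)
  then have "\<delta> + nmul m (\<omega> i) + \<omega> i \<in> X" by (simp add: omega_invariant_add)
  then show ?case by (simp add: algebra_simps)
qed simp

lemma omega_invariant_add_combination:
  assumes "finite S" "S \<subseteq> {1..n}" "\<delta> \<in> X"
  shows "\<delta> + (\<Sum>k\<in>S. nmul (c k) (\<omega> k)) \<in> X"
  using assms
proof (induction S arbitrary: \<delta> rule: finite_induct)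
  case (insert a S)
  then have "\<delta> + nmul (c a) (\<omega> a) + (\<Sum>k\<in>S. nmul (c k) (\<omega> k)) \<in> X"
    by (simp add: omega_invariant_add_nmul)
  then show ?case using insert by (simp add: algebra_simps)
qed simp

lemma omega_invariant_descending_chain:
  assumes "\<gamma> \<in> X"
  shows "\<exists>c. sum c {1..n} = L \<and> \<gamma> - (\<Sum>k\<in>{1..n}. nmul (c k) (\<omega> k)) \<in> X"
proof (induction L)
  case 0
  show ?case using assms by (intro exI[of _ "\<lambda>_. 0"]) simp
next
  case (Suc L)
  then obtain c where c: "sum c {1..n} = L" "\<gamma> - (\<Sum>k\<in>{1..n}. nmul (c k) (\<omega> k)) \<in> X"
    by blast
  then obtain j where j: "j \<in> {1..n}" "\<gamma> - (\<Sum>k\<in>{1..n}. nmul (c k) (\<omega> k)) - \<omega> j \<in> X"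
    using omega_invariant_predecessor by blast
  define c' where "c' = c(j := Suc (c j))"
  have "sum c' {1..n} = Suc (sum c {1..n})"
    using j(1) by (simp add: c'_def sum.remove sum.cong[OF refl, of "{1..n} - {j}" c' c])
  moreover have "(\<Sum>k\<in>{1..n}. nmul (c' k) (\<omega> k)) = (\<Sum>k\<in>{1..n}. nmul (c k) (\<omega> k)) + \<omega> j"
    using j(1) by (simp add: c'_def sum.remove algebra_simps
        sum.cong[OF refl, of "{1..n} - {j}" "\<lambda>k. nmul (c' k) (\<omega> k)" "\<lambda>k. nmul (c k) (\<omega> k)"])
  ultimately show ?case using c j(2) by (intro exI[of _ c']) (simp add: algebra_simps)
qed

lemma omega_invariant_sub_combination:
  assumes "\<gamma> - (\<Sum>k\<in>{1..n}. nmul (c k) (\<omega> k)) \<in> X" and "\<forall>k\<in>{1..n}. d k \<le> c k"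
  shows "\<gamma> - (\<Sum>k\<in>{1..n}. nmul (d k) (\<omega> k)) \<in> X"
proof -
  have "\<gamma> - (\<Sum>k\<in>{1..n}. nmul (d k) (\<omega> k))
      = \<gamma> - (\<Sum>k\<in>{1..n}. nmul (c k) (\<omega> k)) + (\<Sum>k\<in>{1..n}. nmul (c k - d k) (\<omega> k))"
    using assms(2) by (simp add: nmul_diff sum_subtractf)
  then show ?thesis
    using omega_invariant_add_combination[OF finite_atLeastAtMost order_refl assms(1),
        of "\<lambda>k. c k - d k"] by argo
qed

lemma omega_invariant_ray:
  assumes "\<gamma> \<in> X"
  shows "\<exists>i\<in>{1..n}. \<forall>m. \<gamma> - nmul m (\<omega> i) \<in> X"
proof (rule ccontr)
  assume "\<not> ?thesis"
  then obtain f where f: "\<And>i. i \<in> {1..n} \<Longrightarrow> \<gamma> - nmul (f i) (\<omega> i) \<notin> X"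
    by metis
  obtain c where c: "sum c {1..n} = sum f {1..n}" "\<gamma> - (\<Sum>k\<in>{1..n}. nmul (c k) (\<omega> k)) \<in> X"
    using omega_invariant_descending_chain[OF assms] by blast
  have "{1..n} \<noteq> {}"
    using omega_invariant_predecessor[OF assms] by blast
  then obtain i where i: "i \<in> {1..n}" "f i \<le> c i"
    using c(1) sum_strict_mono[of "{1..n}" c f] by (force simp: not_le)
  define d where "d k = (if k = i then f i else 0)" for k
  have "\<gamma> - (\<Sum>k\<in>{1..n}. nmul (d k) (\<omega> k)) \<in> X"
    using omega_invariant_sub_combination[OF c(2)] i(2) by (simp add: d_def)
  moreover have "(\<Sum>k\<in>{1..n}. nmul (d k) (\<omega> k))
      = (\<Sum>k\<in>{1..n}. if k = i then nmul (f i) (\<omega> i) else 0)"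
    by (rule sum.cong) (simp_all add: d_def)
  ultimately show False using f i(1) by simp
qed

lemma omega_invariant_torsion_ray:
  assumes "\<delta> \<in> X" "i \<in> {1..n}" "nmul r (\<omega> i) = 0" "r > 0"
  shows "\<delta> - nmul m (\<omega> i) \<in> X"
  using omega_invariant_add_nmul[OF assms(1,2), of "r * m - m"] nmul_torsion_neg[OF assms(3,4)]
  by simp

lemma omega_invariant_ray_or_double_ray_if_not_bad:
  assumes "\<not> omega_bad n \<omega> X" and "\<gamma> \<in> X"
  shows "(\<exists>i\<in>{1..n}. \<forall>m::nat. m > 0 \<longrightarrow>
            \<gamma> - nmul m (\<omega> i) \<in> X \<and> \<gamma> - nmul m (\<omega> i) \<noteq> \<gamma>)
     \<or> (\<exists>i\<in>{1..n}. \<exists>j\<in>{1..n}. i \<noteq> j \<and> (\<forall>m::nat. m > 0 \<longrightarrow>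
            \<gamma> - nmul m (\<omega> i) - \<omega> j \<in> X))"
proof (cases "\<exists>i\<in>{1..n}. \<exists>r>0. nmul r (\<omega> i) = 0")
  case True
  then obtain i r where i: "i \<in> {1..n}" "r > 0" "nmul r (\<omega> i) = 0"
    by blast
  have "\<exists>j\<in>{1..n}. j \<noteq> i \<and> \<gamma> - \<omega> j \<in> X"
  proof (rule ccontr)
    assume no_other: "\<not> ?thesis"
    obtain p where p: "p \<in> {1..n}" "\<gamma> - \<omega> p \<in> X"
      using omega_invariant_predecessor[OF assms(2)] by blast
    with no_other have "p = i" by blast
    with p(2) have "\<gamma> - \<omega> i \<in> X" by simp
    with no_other have "\<forall>j\<in>{1..n}. \<gamma> - \<omega> j \<in> X \<longleftrightarrow> j = i"
      by blast
    then have "omega_bad n \<omega> X"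
      unfolding omega_bad_def using inv assms(2) i by blast
    with assms(1) show False ..
  qed
  then obtain j where j: "j \<in> {1..n}" "j \<noteq> i" "\<gamma> - \<omega> j \<in> X"
    by blast
  have "\<gamma> - nmul m (\<omega> i) - \<omega> j \<in> X" for m
    using omega_invariant_torsion_ray[OF j(3) i(1,3,2), of m] by (simp add: algebra_simps)
  with j(2) have "i \<noteq> j \<and> (\<forall>m::nat. m > 0 \<longrightarrow> \<gamma> - nmul m (\<omega> i) - \<omega> j \<in> X)"
    by simp
  with i(1) j(1) show ?thesis by blast
next
  case False
  obtain i where i: "i \<in> {1..n}" "\<forall>m. \<gamma> - nmul m (\<omega> i) \<in> X"
    using omega_invariant_ray[OF assms(2)] by blast
  have "nmul m (\<omega> i) \<noteq> 0" if "m > 0" for m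
    using False i(1) that by blast
  with i(2) have "\<forall>m::nat. m > 0 \<longrightarrow> \<gamma> - nmul m (\<omega> i) \<in> X \<and> \<gamma> - nmul m (\<omega> i) \<noteq> \<gamma>"
    by simp
  with i(1) show ?thesis by blast
qed

lemma no_ray_or_double_ray_at_bad_point:
  assumes unique: "\<forall>j\<in>{1..n}. \<gamma> - \<omega> j \<in> X \<longleftrightarrow> j = i"
    and torsion: "nmul r (\<omega> i) = 0" "r > 0"
  shows "\<not> ((\<exists>i\<in>{1..n}. \<forall>m::nat. m > 0 \<longrightarrow>
            \<gamma> - nmul m (\<omega> i) \<in> X \<and> \<gamma> - nmul m (\<omega> i) \<noteq> \<gamma>)
     \<or> (\<exists>i\<in>{1..n}. \<exists>j\<in>{1..n}. i \<noteq> j \<and> (\<forall>m::nat. m > 0 \<longrightarrow>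
            \<gamma> - nmul m (\<omega> i) - \<omega> j \<in> X)))"
proof (intro notI, elim disjE bexE conjE)
  fix k
  assume k: "k \<in> {1..n}"
    and ray: "\<forall>m::nat. m > 0 \<longrightarrow> \<gamma> - nmul m (\<omega> k) \<in> X \<and> \<gamma> - nmul m (\<omega> k) \<noteq> \<gamma>"
  then have "k = i" using unique ray[rule_format, of 1] by simp
  then show False using ray[rule_format, of r] torsion by simp
next
  fix k j
  assume kj: "k \<in> {1..n}" "j \<in> {1..n}" "k \<noteq> j"
    and double_ray: "\<forall>m::nat. m > 0 \<longrightarrow> \<gamma> - nmul m (\<omega> k) - \<omega> j \<in> X"
  from double_ray[rule_format, of 1] have "\<gamma> - \<omega> k - \<omega> j \<in> X" by simp
  then have "\<gamma> - \<omega> k - \<omega> j + \<omega> j \<in> X" "\<gamma> - \<omega> k - \<omega> j + \<omega> k \<in> X"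
    using kj omega_invariant_add by blast+
  then have "\<gamma> - \<omega> k \<in> X" "\<gamma> - \<omega> j \<in> X" by (simp_all add: algebra_simps)
  then have "k = i" "j = i" using unique kj(1,2) by blast+
  with kj(3) show False by simp
qed

end

theorem lemma4p3:
  fixes \<omega> :: "nat \<Rightarrow> 'a::{topological_ab_group_add, t2_space, second_countable_topology}"
    and X :: "'a set" and n :: nat
  assumes "locally_compact_space (euclidean :: 'a topology)"
    and "n \<ge> 2"
    and "omega_invariant n \<omega> X"
  shows "omega_good n \<omega> X \<longleftrightarrow>
    (\<forall>\<gamma>\<in>X.
       (\<exists>i\<in>{1..n}. \<forall>m::nat. m > 0 \<longrightarrow>
            \<gamma> - nmul m (\<omega> i) \<in> X \<and> \<gamma> - nmul m (\<omega> i) \<noteq> \<gamma>)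
     \<or> (\<exists>i\<in>{1..n}. \<exists>j\<in>{1..n}. i \<noteq> j \<and> (\<forall>m::nat. m > 0 \<longrightarrow>
            \<gamma> - nmul m (\<omega> i) - \<omega> j \<in> X)))"
  (is "_ \<longleftrightarrow> (\<forall>\<gamma>\<in>X. ?ray \<gamma> \<or> ?double_ray \<gamma>)")
proof
  assume "omega_good n \<omega> X"
  then show "\<forall>\<gamma>\<in>X. ?ray \<gamma> \<or> ?double_ray \<gamma>"
    using omega_invariant_ray_or_double_ray_if_not_bad[OF assms(3)]
    unfolding omega_good_def by blast
next
  assume ray_or_double_ray: "\<forall>\<gamma>\<in>X. ?ray \<gamma> \<or> ?double_ray \<gamma>"
  show "omega_good n \<omega> X"
    unfolding omega_good_def
  proof (intro conjI notI assms(3))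
    assume "omega_bad n \<omega> X"
    then obtain \<gamma> i r where \<gamma>: "\<gamma> \<in> X"
      and unique: "\<forall>j\<in>{1..n}. \<gamma> - \<omega> j \<in> X \<longleftrightarrow> j = i"
      and torsion: "nmul r (\<omega> i) = 0" "r > 0"
      unfolding omega_bad_def by (elim conjE bexE exE) blast
    from ray_or_double_ray \<gamma> have "?ray \<gamma> \<or> ?double_ray \<gamma>" ..
    with no_ray_or_double_ray_at_bad_point[OF assms(3) unique torsion] show False
      by contradiction
  qed
qed

end
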